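(* Let $f:M\to\mathbb{R}^3$ be an immersion with eq\"uiaffine transversal vector field $\xi$ and positive definite induced bilinear form $h$, let $(u,v)$ be isothermal coordinates centered at an umbilical point $(0,0)$ with $\lambda_0=b_{11}(0,0)=b_{22}(0,0)\neq0$, and set $q_0=f(0,0)+\lambda_0^{-1}\xi(0,0)$. Let $\nu$ be the co-normal, $p=\nu\cdot(f-q_0)$ the support function, $\mathcal{P}=(p_{uu}-p_{vv},\,2p_{uv})$ and $\mathcal{B}=(b_{11}-b_{22},\,2b_{12})$. Then $$J_1\mathcal{P}(0,0)=\lambda_0^{-1}\delta_0\,J_1\mathcal{B}(0,0),$$ where $J_1$ denotes the $1$-jet at $(0,0)$ and $\delta_0=\delta(0,0)$ with $\delta=[f_u,f_v,\xi][\nu,\nu_u,\nu_v]/\rho$.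
   Context: $D$ is the flat connection of $\mathbb{R}^3$; $h$ and the shape operator $B$ are defined by $D_Xf_*Y=f_*(\nabla_XY)+h(X,Y)\xi$, $D_X\xi=-f_*(BX)+\tau(X)\xi$, eq\"uiaffine meaning $\tau=0$. Isothermal coordinates: $h(\partial_u,\partial_u)=h(\partial_v,\partial_v)=\rho$, $h(\partial_u,\partial_v)=0$. The matrix of $B$ is given by $\xi_u=-b_{11}f_u-b_{21}f_v$, $\xi_v=-b_{12}f_u-b_{22}f_v$ (with $b_{12}=b_{21}$). Umbilical: $B$ a multiple of the identity. The co-normal $\nu$ is defined by $\nu\cdot f_u=\nu\cdot f_v=0$, $\nu\cdot\xi=1$. $[a,b,c]$ is the determinant of three vectors. *)

theory Defs
  imports "HOL-Analysis.Analysis"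
begin

text \<open>Points of the coordinate domain are pairs (u,v). Partial derivatives:
  pd True = d/du, pd False = d/dv.\<close>

definition pd_u :: "(real \<times> real \<Rightarrow> 'a::real_normed_vector) \<Rightarrow> real \<times> real \<Rightarrow> 'a" where
  "pd_u g x = vector_derivative (\<lambda>t. g (t, snd x)) (at (fst x))"

definition pd_v :: "(real \<times> real \<Rightarrow> 'a::real_normed_vector) \<Rightarrow> real \<times> real \<Rightarrow> 'a" where
  "pd_v g x = vector_derivative (\<lambda>t. g (fst x, t)) (at (snd x))"

definition pd :: "bool \<Rightarrow> (real \<times> real \<Rightarrow> 'a::real_normed_vector) \<Rightarrow> real \<times> real \<Rightarrow> 'a" where
  "pd b g = (if b then pd_u g else pd_v g)"

fun pds :: "bool list \<Rightarrow> (real \<times> real \<Rightarrow> 'a::real_normed_vector) \<Rightarrow> real \<times> real \<Rightarrow> 'a" where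
  "pds [] g = g"
| "pds (b # bs) g = pd b (pds bs g)"

definition smooth2 :: "(real \<times> real) set \<Rightarrow> (real \<times> real \<Rightarrow> 'a::real_normed_vector) \<Rightarrow> bool" where
  "smooth2 U g \<longleftrightarrow> (\<forall>bs. pds bs g differentiable_on U)"

definition det3 :: "real^3 \<Rightarrow> real^3 \<Rightarrow> real^3 \<Rightarrow> real" where
  "det3 a b c = det (vector [a, b, c] :: real^3^3)"

definition jet1 :: "(real \<times> real \<Rightarrow> 'a::real_normed_vector) \<Rightarrow> real \<times> real \<Rightarrow> 'a \<times> 'a \<times> 'a" where
  "jet1 g x = (g x, pd_u g x, pd_v g x)"

end

theory Submission
  imports Defs
begin

text \<open>Write \<open>f - q\<^sub>0 = \<alpha> f\<^sub>u + \<beta> f\<^sub>v + p \<xi>\<close> in the frame \<open>(f\<^sub>u, f\<^sub>v, \<xi>)\<close>; the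
  \<open>\<xi>\<close>-coordinate is the support function p, and the dual frame ends with the conormal \<open>\<nu>\<close>.
  Differentiating and pairing with the dual frame gives \<open>p\<^sub>u = -\<rho>\<alpha>\<close>, \<open>p\<^sub>v = -\<rho>\<beta>\<close>, and
  \<open>\<alpha>\<^sub>u = 1 + p b\<^sub>1\<^sub>1\<close>, \<open>\<alpha>\<^sub>v = p b\<^sub>1\<^sub>2\<close>, \<open>\<beta>\<^sub>v = 1 + p b\<^sub>2\<^sub>2\<close> modulo multiples of \<open>\<alpha>\<close> and \<open>\<beta>\<close>.
  At the umbilic, \<open>q\<^sub>0 = f + \<lambda>\<^sub>0\<^sup>-\<^sup>1 \<xi>\<close> makes \<open>\<alpha> = \<beta> = 0\<close> and \<open>p = -\<lambda>\<^sub>0\<^sup>-\<^sup>1\<close>, so \<open>\<alpha>\<close> and \<open>\<beta>\<close>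
  have vanishing 1-jet there. Hence p has vanishing 2-jet and its third derivatives are
  \<open>\<rho>/\<lambda>\<^sub>0\<close> times the first derivatives of the \<open>b\<^sub>i\<^sub>j\<close>. Finally \<open>\<delta> = \<rho>\<close>: the pairings of
  \<open>(\<nu>, \<nu>\<^sub>u, \<nu>\<^sub>v)\<close> with \<open>(f\<^sub>u, f\<^sub>v, \<xi>)\<close> form a matrix of determinant \<open>\<rho>\<^sup>2\<close>.\<close>

section \<open>Partial derivatives\<close>

definition axis_line :: "bool \<Rightarrow> real \<times> real \<Rightarrow> real \<Rightarrow> real \<times> real" where
  "axis_line b x t = (if b then (t, snd x) else (fst x, t))"

definition axis_coord :: "bool \<Rightarrow> real \<times> real \<Rightarrow> real" where
  "axis_coord b x = (if b then fst x else snd x)"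

lemma pd_eq_vector_derivative_axis_line:
  "pd b g x = vector_derivative (\<lambda>t. g (axis_line b x t)) (at (axis_coord b x))"
  by (cases b) (simp_all add: pd_def pd_u_def pd_v_def axis_line_def axis_coord_def)

lemma pd_u_eq_pd: "pd_u = pd True"
  and pd_v_eq_pd: "pd_v = pd False"
  by (auto simp: pd_def fun_eq_iff)

lemma axis_line_axis_coord [simp]: "axis_line b x (axis_coord b x) = x"
  by (cases b) (simp_all add: axis_line_def axis_coord_def)

lemma differentiable_axis_line: "axis_line b x differentiable (at t)"
  unfolding differentiable_def
  by (cases b) (auto simp: axis_line_def[abs_def] intro!: derivative_eq_intros)

lemma continuous_on_axis_line: "continuous_on UNIV (axis_line b x)"
  by (cases b) (auto simp: axis_line_def intro!: continuous_intros)

lemma pd_has_vector_derivative: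
  assumes "g differentiable (at x)"
  shows "((\<lambda>t. g (axis_line b x t)) has_vector_derivative pd b g x) (at (axis_coord b x))"
proof -
  have "(g \<circ> axis_line b x) differentiable (at (axis_coord b x))"
    using assms differentiable_axis_line by (intro differentiable_chain_at) auto
  then show ?thesis
    unfolding pd_eq_vector_derivative_axis_line
    using vector_derivative_works by (auto simp: o_def)
qed

lemma pd_eqI:
  assumes "((\<lambda>t. g (axis_line b x t)) has_vector_derivative g') (at (axis_coord b x))"
  shows "pd b g x = g'"
  using assms by (simp add: pd_eq_vector_derivative_axis_line vector_derivative_at)

lemma pd_const [simp]: "pd b (\<lambda>x. c) x = 0"
  by (simp add: pd_eq_vector_derivative_axis_line)

lemma pd_cong:
  assumes "open U" "x \<in> U" "\<And>y. y \<in> U \<Longrightarrow> g y = h y"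
  shows "pd b g x = pd b h x"
proof -
  have "open (axis_line b x -` U)"
    using continuous_on_axis_line assms(1) open_vimage by blast
  moreover have "axis_coord b x \<in> axis_line b x -` U"
    using assms(2) by simp
  ultimately have "eventually (\<lambda>t. axis_line b x t \<in> U) (nhds (axis_coord b x))"
    by (metis eventually_nhds vimage_eq)
  then have "eventually (\<lambda>t. g (axis_line b x t) = h (axis_line b x t)) (nhds (axis_coord b x))"
    by eventually_elim (use assms(3) in auto)
  then show ?thesis
    unfolding pd_eq_vector_derivative_axis_line by (intro vector_derivative_cong_eq) auto
qed

lemma differentiable_bilinear:
  assumes "bounded_bilinear P" "g differentiable (at x within S)" "h differentiable (at x within S)"
  shows "(\<lambda>x. P (g x) (h x)) differentiable (at x within S)"
  using bounded_bilinear.FDERIV[OF assms(1)] assms(2,3) unfolding differentiable_def by blast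

lemma pd_add_differentiable:
  assumes "g differentiable (at x)" "h differentiable (at x)"
  shows "pd b (\<lambda>x. g x + h x) x = pd b g x + pd b h x"
  by (rule pd_eqI) (intro has_vector_derivative_add pd_has_vector_derivative assms)

lemma pd_linear:
  assumes "bounded_linear L" "g differentiable (at x)"
  shows "pd b (\<lambda>x. L (g x)) x = L (pd b g x)"
  by (rule pd_eqI)
    (intro bounded_linear.has_vector_derivative[OF assms(1)] pd_has_vector_derivative assms)

lemma pd_bilinear:
  assumes "bounded_bilinear P" "g differentiable (at x)" "h differentiable (at x)"
  shows "pd b (\<lambda>x. P (g x) (h x)) x = P (pd b g x) (h x) + P (g x) (pd b h x)"
  by (rule pd_eqI)
    (use bounded_bilinear.has_vector_derivative[OF assms(1)
          pd_has_vector_derivative[OF assms(2)] pd_has_vector_derivative[OF assms(3)]]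
     in \<open>simp add: add.commute\<close>)

lemma pd_inverse:
  fixes g :: "real \<times> real \<Rightarrow> real"
  assumes "g differentiable (at x)" "g x \<noteq> 0"
  shows "pd b (\<lambda>x. inverse (g x)) x = - (pd b g x * (inverse (g x) * inverse (g x)))"
proof (rule pd_eqI)
  have "((\<lambda>t. g (axis_line b x t)) has_real_derivative pd b g x) (at (axis_coord b x))"
    using pd_has_vector_derivative[OF assms(1)] has_real_derivative_iff_has_vector_derivative
    by blast
  from DERIV_inverse_fun[OF this] assms(2)
  show "((\<lambda>t. inverse (g (axis_line b x t))) has_vector_derivative
      - (pd b g x * (inverse (g x) * inverse (g x)))) (at (axis_coord b x))"
    by (simp add: has_real_derivative_iff_has_vector_derivative power2_eq_square)
qed

lemma pd_Pair:
  assumes "g differentiable (at x)" "h differentiable (at x)"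
  shows "pd b (\<lambda>x. (g x, h x)) x = (pd b g x, pd b h x)"
  by (rule pd_eqI) (intro has_vector_derivative_Pair pd_has_vector_derivative assms)

section \<open>Smoothness\<close>

definition smooth2_upto ::
    "nat \<Rightarrow> (real \<times> real) set \<Rightarrow> (real \<times> real \<Rightarrow> 'a::real_normed_vector) \<Rightarrow> bool" where
  "smooth2_upto n U g \<longleftrightarrow> (\<forall>bs. length bs \<le> n \<longrightarrow> pds bs g differentiable_on U)"

lemma pds_append: "pds (bs @ [b]) g = pds bs (pd b g)"
  by (induction bs) auto

lemma smooth2_iff_smooth2_upto: "smooth2 U g \<longleftrightarrow> (\<forall>n. smooth2_upto n U g)"
  unfolding smooth2_def smooth2_upto_def by auto

lemma smooth2_upto_0: "smooth2_upto 0 U g \<longleftrightarrow> g differentiable_on U"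
  unfolding smooth2_upto_def by auto

lemma smooth2_upto_Suc:
  "smooth2_upto (Suc n) U g \<longleftrightarrow> g differentiable_on U \<and> (\<forall>b. smooth2_upto n U (pd b g))"
proof
  assume g: "smooth2_upto (Suc n) U g"
  have "pds bs (pd b g) differentiable_on U" if "length bs \<le> n" for b bs
  proof -
    have "pds (bs @ [b]) g differentiable_on U"
      using g that unfolding smooth2_upto_def by simp
    then show ?thesis
      by (simp add: pds_append)
  qed
  moreover have "g differentiable_on U"
    using g unfolding smooth2_upto_def by (metis pds.simps(1) le0 list.size(3))
  ultimately show "g differentiable_on U \<and> (\<forall>b. smooth2_upto n U (pd b g))"
    unfolding smooth2_upto_def by blast
next
  assume g: "g differentiable_on U \<and> (\<forall>b. smooth2_upto n U (pd b g))"
  show "smooth2_upto (Suc n) U g"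
    unfolding smooth2_upto_def
  proof (intro allI impI)
    fix bs :: "bool list"
    assume "length bs \<le> Suc n"
    then show "pds bs g differentiable_on U"
      using g by (cases bs rule: rev_cases) (auto simp: pds_append smooth2_upto_def)
  qed
qed

lemma smooth2_upto_Suc_imp: "smooth2_upto (Suc n) U g \<Longrightarrow> smooth2_upto n U g"
  unfolding smooth2_upto_def by auto

lemma differentiable_on_cong:
  assumes "\<And>y. y \<in> U \<Longrightarrow> g y = h y" "g differentiable_on U"
  shows "h differentiable_on U"
  using assms differentiable_transform_within[of g _ U 1 h]
  unfolding differentiable_on_def by simp

lemma pds_cong:
  assumes "open U" "\<And>y. y \<in> U \<Longrightarrow> g y = h y" "x \<in> U"
  shows "pds bs g x = pds bs h x"
  using assms(3) by (induction bs arbitrary: x) (auto intro: pd_cong[OF assms(1)] assms(2))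

lemma smooth2_upto_cong:
  assumes "open U" "\<And>y. y \<in> U \<Longrightarrow> g y = h y" "smooth2_upto n U g"
  shows "smooth2_upto n U h"
  unfolding smooth2_upto_def
proof (intro allI impI)
  fix bs :: "bool list"
  assume "length bs \<le> n"
  then have "pds bs g differentiable_on U"
    using assms(3) unfolding smooth2_upto_def by blast
  then show "pds bs h differentiable_on U"
    by (rule differentiable_on_cong[rotated]) (rule pds_cong[OF assms(1,2)])
qed

lemma smooth2_cong:
  assumes "open U" "\<And>y. y \<in> U \<Longrightarrow> g y = h y" "smooth2 U g"
  shows "smooth2 U h"
  using assms(2,3) smooth2_upto_cong[OF assms(1), of g h]
  unfolding smooth2_iff_smooth2_upto by blast

lemma smooth2_pd: "smooth2 U g \<Longrightarrow> smooth2 U (pd b g)"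
  unfolding smooth2_iff_smooth2_upto using smooth2_upto_Suc by blast

lemma smooth2_imp_differentiable:
  "open U \<Longrightarrow> smooth2 U g \<Longrightarrow> x \<in> U \<Longrightarrow> g differentiable (at x)"
  unfolding smooth2_def by (metis differentiable_on_eq_differentiable_at pds.simps(1))

lemma smooth2_const: "smooth2 U (\<lambda>x. c)"
proof -
  have "pds bs (\<lambda>x. c) = (if bs = [] then (\<lambda>x. c) else (\<lambda>x. 0))" for bs
  proof (induction bs)
    case (Cons b bs)
    have "pd b (\<lambda>x. k) = (\<lambda>x. 0)" for k :: 'a
      by (simp add: fun_eq_iff)
    with Cons show ?case by auto
  qed simp
  then show ?thesis
    unfolding smooth2_def by simp
qed

context
  fixes U :: "(real \<times> real) set"
  assumes open_U: "open U"
begin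

lemma smooth2_upto_add:
  "smooth2_upto n U g \<Longrightarrow> smooth2_upto n U h \<Longrightarrow> smooth2_upto n U (\<lambda>x. g x + h x)"
proof (induction n arbitrary: g h)
  case 0
  then show ?case
    by (auto simp: smooth2_upto_0 differentiable_on_eq_differentiable_at[OF open_U])
next
  case (Suc n)
  then have dg: "\<forall>x\<in>U. g differentiable (at x)" "\<forall>x\<in>U. h differentiable (at x)"
    by (auto simp: smooth2_upto_Suc differentiable_on_eq_differentiable_at[OF open_U])
  show ?case
    unfolding smooth2_upto_Suc
  proof (intro conjI allI)
    show "(\<lambda>x. g x + h x) differentiable_on U"
      using dg by (auto simp: differentiable_on_eq_differentiable_at[OF open_U])
    fix b
    have "smooth2_upto n U (\<lambda>x. pd b g x + pd b h x)"
      using Suc smooth2_upto_Suc by blast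
    then show "smooth2_upto n U (pd b (\<lambda>x. g x + h x))"
      by (rule smooth2_upto_cong[OF open_U, rotated]) (simp add: dg pd_add_differentiable)
  qed
qed

lemma smooth2_upto_linear:
  assumes "bounded_linear L"
  shows "smooth2_upto n U g \<Longrightarrow> smooth2_upto n U (\<lambda>x. L (g x))"
proof (induction n arbitrary: g)
  case 0
  then show ?case
    using assms by (auto simp: smooth2_upto_0 differentiable_on_eq_differentiable_at[OF open_U]
        intro: differentiable_chain_at[unfolded o_def] bounded_linear_imp_differentiable)
next
  case (Suc n)
  then have dg: "\<forall>x\<in>U. g differentiable (at x)"
    by (auto simp: smooth2_upto_Suc differentiable_on_eq_differentiable_at[OF open_U])
  show ?case
    unfolding smooth2_upto_Suc
  proof (intro conjI allI)
    show "(\<lambda>x. L (g x)) differentiable_on U"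
      using dg assms by (auto simp: differentiable_on_eq_differentiable_at[OF open_U]
          intro: differentiable_chain_at[unfolded o_def] bounded_linear_imp_differentiable)
    fix b
    have "smooth2_upto n U (\<lambda>x. L (pd b g x))"
      using Suc smooth2_upto_Suc by blast
    then show "smooth2_upto n U (pd b (\<lambda>x. L (g x)))"
      by (rule smooth2_upto_cong[OF open_U, rotated]) (simp add: dg assms pd_linear)
  qed
qed

lemma smooth2_upto_bilinear:
  assumes "bounded_bilinear P"
  shows "smooth2_upto n U g \<Longrightarrow> smooth2_upto n U h \<Longrightarrow> smooth2_upto n U (\<lambda>x. P (g x) (h x))"
proof (induction n arbitrary: g h)
  case 0
  then show ?case
    using assms by (auto simp: smooth2_upto_0 differentiable_on_def
        intro: differentiable_bilinear)
next
  case (Suc n)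
  then have dg: "\<forall>x\<in>U. g differentiable (at x)" "\<forall>x\<in>U. h differentiable (at x)"
    by (auto simp: smooth2_upto_Suc differentiable_on_eq_differentiable_at[OF open_U])
  show ?case
    unfolding smooth2_upto_Suc
  proof (intro conjI allI)
    show "(\<lambda>x. P (g x) (h x)) differentiable_on U"
      using dg assms by (auto simp: differentiable_on_eq_differentiable_at[OF open_U]
          intro: differentiable_bilinear)
    fix b
    have "smooth2_upto n U (\<lambda>x. P (pd b g x) (h x))" "smooth2_upto n U (\<lambda>x. P (g x) (pd b h x))"
      using Suc.IH Suc.prems smooth2_upto_Suc smooth2_upto_Suc_imp by blast+
    then have "smooth2_upto n U (\<lambda>x. P (pd b g x) (h x) + P (g x) (pd b h x))"
      by (rule smooth2_upto_add)
    then show "smooth2_upto n U (pd b (\<lambda>x. P (g x) (h x)))"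
      by (rule smooth2_upto_cong[OF open_U, rotated]) (simp add: dg assms pd_bilinear)
  qed
qed

lemma smooth2_upto_inverse:
  fixes g :: "real \<times> real \<Rightarrow> real"
  assumes nz: "\<And>x. x \<in> U \<Longrightarrow> g x \<noteq> 0"
  shows "smooth2_upto n U g \<Longrightarrow> smooth2_upto n U (\<lambda>x. inverse (g x))"
proof (induction n)
  case 0
  then show ?case
    using nz by (auto simp: smooth2_upto_0 differentiable_on_eq_differentiable_at[OF open_U]
        intro!: derivative_intros)
next
  case (Suc n)
  then have dg: "\<forall>x\<in>U. g differentiable (at x)"
    by (auto simp: smooth2_upto_Suc differentiable_on_eq_differentiable_at[OF open_U])
  have inv: "smooth2_upto n U (\<lambda>x. inverse (g x))"
    using Suc smooth2_upto_Suc_imp by blast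
  show ?case
    unfolding smooth2_upto_Suc
  proof (intro conjI allI)
    show "(\<lambda>x. inverse (g x)) differentiable_on U"
      using dg nz by (auto simp: differentiable_on_eq_differentiable_at[OF open_U]
          intro!: derivative_intros)
    fix b
    have "smooth2_upto n U (\<lambda>x. inverse (g x) * inverse (g x))"
      by (rule smooth2_upto_bilinear[OF bounded_bilinear_mult inv inv])
    then have "smooth2_upto n U (\<lambda>x. pd b g x * (inverse (g x) * inverse (g x)))"
      using Suc.prems smooth2_upto_Suc smooth2_upto_bilinear[OF bounded_bilinear_mult] by blast
    then have "smooth2_upto n U (\<lambda>x. - (pd b g x * (inverse (g x) * inverse (g x))))"
      by (rule smooth2_upto_linear[OF bounded_linear_minus[OF bounded_linear_ident]])
    then show "smooth2_upto n U (pd b (\<lambda>x. inverse (g x)))"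
      by (rule smooth2_upto_cong[OF open_U, rotated]) (simp add: dg nz pd_inverse)
  qed
qed

lemma smooth2_add: "smooth2 U g \<Longrightarrow> smooth2 U h \<Longrightarrow> smooth2 U (\<lambda>x. g x + h x)"
  by (simp add: smooth2_iff_smooth2_upto smooth2_upto_add)

lemma smooth2_linear: "bounded_linear L \<Longrightarrow> smooth2 U g \<Longrightarrow> smooth2 U (\<lambda>x. L (g x))"
  by (simp add: smooth2_iff_smooth2_upto smooth2_upto_linear)

lemma smooth2_bilinear:
  "bounded_bilinear P \<Longrightarrow> smooth2 U g \<Longrightarrow> smooth2 U h \<Longrightarrow> smooth2 U (\<lambda>x. P (g x) (h x))"
  by (simp add: smooth2_iff_smooth2_upto smooth2_upto_bilinear)

lemma smooth2_inverse:
  "(\<And>x. x \<in> U \<Longrightarrow> g x \<noteq> 0) \<Longrightarrow> smooth2 U g \<Longrightarrow> smooth2 U (\<lambda>x. inverse (g x :: real))"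
  by (simp add: smooth2_iff_smooth2_upto smooth2_upto_inverse)

lemma smooth2_minus: "smooth2 U g \<Longrightarrow> smooth2 U (\<lambda>x. - g x)"
  by (rule smooth2_linear[OF bounded_linear_minus[OF bounded_linear_ident]])

lemma smooth2_diff: "smooth2 U g \<Longrightarrow> smooth2 U h \<Longrightarrow> smooth2 U (\<lambda>x. g x - h x)"
  using smooth2_add[of g "\<lambda>x. - h x"] smooth2_minus[of h] by simp

lemma smooth2_mult: "smooth2 U g \<Longrightarrow> smooth2 U h \<Longrightarrow> smooth2 U (\<lambda>x. g x * h x :: real)"
  by (rule smooth2_bilinear[OF bounded_bilinear_mult])

lemma smooth2_scaleR: "smooth2 U g \<Longrightarrow> smooth2 U h \<Longrightarrow> smooth2 U (\<lambda>x. g x *\<^sub>R h x)"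
  by (rule smooth2_bilinear[OF bounded_bilinear_scaleR])

lemma smooth2_inner: "smooth2 U g \<Longrightarrow> smooth2 U h \<Longrightarrow> smooth2 U (\<lambda>x. g x \<bullet> h x)"
  by (rule smooth2_bilinear[OF bounded_bilinear_inner])

lemma smooth2_cross3: "smooth2 U g \<Longrightarrow> smooth2 U h \<Longrightarrow> smooth2 U (\<lambda>x. cross3 (g x) (h x))"
  using bilinear_conv_bounded_bilinear bilinear_cross smooth2_bilinear by blast

lemmas smooth2_intros =
  smooth2_add smooth2_diff smooth2_minus smooth2_mult smooth2_scaleR smooth2_inner smooth2_cross3
  smooth2_const smooth2_pd

lemma pd_add:
  "x \<in> U \<Longrightarrow> smooth2 U g \<Longrightarrow> smooth2 U h \<Longrightarrow> pd b (\<lambda>x. g x + h x) x = pd b g x + pd b h x"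
  by (simp add: pd_add_differentiable smooth2_imp_differentiable[OF open_U])

lemma pd_minus: "x \<in> U \<Longrightarrow> smooth2 U g \<Longrightarrow> pd b (\<lambda>x. - g x) x = - pd b g x"
  by (simp add: pd_linear[OF bounded_linear_minus[OF bounded_linear_ident]]
      smooth2_imp_differentiable[OF open_U])

lemma pd_diff:
  "x \<in> U \<Longrightarrow> smooth2 U g \<Longrightarrow> smooth2 U h \<Longrightarrow> pd b (\<lambda>x. g x - h x) x = pd b g x - pd b h x"
  using pd_add[of x g "\<lambda>x. - h x" b] pd_minus[of x h b] smooth2_minus[of h] by simp

lemma pd_mult:
  "x \<in> U \<Longrightarrow> smooth2 U g \<Longrightarrow> smooth2 U h \<Longrightarrow>
    pd b (\<lambda>x. g x * h x :: real) x = pd b g x * h x + g x * pd b h x"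
  by (simp add: pd_bilinear[OF bounded_bilinear_mult] smooth2_imp_differentiable[OF open_U])

lemma pd_scaleR:
  "x \<in> U \<Longrightarrow> smooth2 U g \<Longrightarrow> smooth2 U h \<Longrightarrow>
    pd b (\<lambda>x. g x *\<^sub>R h x) x = pd b g x *\<^sub>R h x + g x *\<^sub>R pd b h x"
  by (simp add: pd_bilinear[OF bounded_bilinear_scaleR] smooth2_imp_differentiable[OF open_U])

lemma pd_inner:
  "x \<in> U \<Longrightarrow> smooth2 U g \<Longrightarrow> smooth2 U h \<Longrightarrow>
    pd b (\<lambda>x. g x \<bullet> h x) x = pd b g x \<bullet> h x + g x \<bullet> pd b h x"
  by (simp add: pd_bilinear[OF bounded_bilinear_inner] smooth2_imp_differentiable[OF open_U])

lemmas pd_simps = pd_add pd_diff pd_minus pd_mult pd_scaleR pd_inner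

lemma pd_inner_eq_const:
  assumes "smooth2 U g" "smooth2 U h" "x \<in> U" "\<And>y. y \<in> U \<Longrightarrow> g y \<bullet> h y = k"
  shows "pd b g x \<bullet> h x = - (g x \<bullet> pd b h x)"
proof -
  have "pd b (\<lambda>y. g y \<bullet> h y) x = pd b (\<lambda>y. k) x"
    by (rule pd_cong[OF open_U assms(3,4)])
  then show ?thesis
    using assms by (simp add: pd_inner eq_neg_iff_add_eq_0)
qed

lemma pd_mult_vanishing:
  fixes A R Q :: "real \<times> real \<Rightarrow> real"
  assumes "z \<in> U" "smooth2 U A" "smooth2 U R" "\<And>x. x \<in> U \<Longrightarrow> Q x = A x * R x"
    and "A z = 0"
  shows "pd c Q z = pd c A z * R z"
  using pd_cong[OF open_U assms(1,4)] pd_mult[OF assms(1-3)] assms(5) by simp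

lemma pd_pd_mult_vanishing:
  fixes A R Q :: "real \<times> real \<Rightarrow> real"
  assumes z: "z \<in> U" and A: "smooth2 U A" and R: "smooth2 U R"
    and Q: "\<And>x. x \<in> U \<Longrightarrow> Q x = A x * R x"
    and "A z = 0" "pd b A z = 0" "pd c A z = 0"
  shows "pd c (pd b Q) z = pd c (pd b A) z * R z"
proof -
  have "pd b Q x = pd b A x * R x + A x * pd b R x" if "x \<in> U" for x
    using pd_cong[OF open_U that Q] pd_mult[OF that A R] by simp
  then have "pd c (pd b Q) z = pd c (\<lambda>x. pd b A x * R x + A x * pd b R x) z"
    by (rule pd_cong[OF open_U z])
  then show ?thesis
    using assms by (simp add: pd_simps smooth2_intros)
qed

end

section \<open>Symmetry of mixed partial derivatives\<close>

lemma has_real_derivative_pd_u: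
  fixes g :: "real \<times> real \<Rightarrow> real"
  assumes "g differentiable (at (s, t))"
  shows "((\<lambda>\<sigma>. g (\<sigma>, t)) has_real_derivative pd True g (s, t)) (at s)"
  using pd_has_vector_derivative[OF assms, of True] has_real_derivative_iff_has_vector_derivative
  by (simp add: axis_line_def axis_coord_def)

lemma has_real_derivative_pd_v:
  fixes g :: "real \<times> real \<Rightarrow> real"
  assumes "g differentiable (at (s, t))"
  shows "((\<lambda>\<tau>. g (s, \<tau>)) has_real_derivative pd False g (s, t)) (at t)"
  using pd_has_vector_derivative[OF assms, of False] has_real_derivative_iff_has_vector_derivative
  by (simp add: axis_line_def axis_coord_def)

lemma second_difference_pd_v_pd_u:
  fixes g :: "real \<times> real \<Rightarrow> real"
  assumes "h > 0"
    and dg: "\<And>y. y \<in> cbox (a, c) (a + h, c + h) \<Longrightarrow> g differentiable (at y)"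
    and dpd: "\<And>y. y \<in> cbox (a, c) (a + h, c + h) \<Longrightarrow> pd True g differentiable (at y)"
  obtains s t where "s \<in> {a<..<a + h}" "t \<in> {c<..<c + h}"
    "g (a + h, c + h) - g (a + h, c) - g (a, c + h) + g (a, c) = h * h * pd False (pd True g) (s, t)"
proof -
  have "((\<lambda>\<sigma>. g (\<sigma>, c + h) - g (\<sigma>, c)) has_real_derivative
      pd True g (\<sigma>, c + h) - pd True g (\<sigma>, c)) (at \<sigma>)" if "a \<le> \<sigma>" "\<sigma> \<le> a + h" for \<sigma>
    using that \<open>h > 0\<close> by (intro DERIV_diff has_real_derivative_pd_u dg) (auto simp: cbox_Pair_eq)
  from MVT2[where a = a and b = "a + h", OF _ this] \<open>h > 0\<close> obtain s where s: "a < s" "s < a + h"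
    "(g (a + h, c + h) - g (a + h, c)) - (g (a, c + h) - g (a, c))
      = (a + h - a) * (pd True g (s, c + h) - pd True g (s, c))"
    by auto
  have "((\<lambda>\<tau>. pd True g (s, \<tau>)) has_real_derivative pd False (pd True g) (s, \<tau>)) (at \<tau>)"
    if "c \<le> \<tau>" "\<tau> \<le> c + h" for \<tau>
    using that s by (intro has_real_derivative_pd_v dpd) (auto simp: cbox_Pair_eq)
  from MVT2[where a = c and b = "c + h", OF _ this] \<open>h > 0\<close> obtain t where t: "c < t" "t < c + h"
    "pd True g (s, c + h) - pd True g (s, c) = (c + h - c) * pd False (pd True g) (s, t)"
    by auto
  show ?thesis
    using that[of s t] s t by (simp add: algebra_simps)
qed

lemma second_difference_pd_u_pd_v:
  fixes g :: "real \<times> real \<Rightarrow> real"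
  assumes "h > 0"
    and dg: "\<And>y. y \<in> cbox (a, c) (a + h, c + h) \<Longrightarrow> g differentiable (at y)"
    and dpd: "\<And>y. y \<in> cbox (a, c) (a + h, c + h) \<Longrightarrow> pd False g differentiable (at y)"
  obtains s t where "s \<in> {a<..<a + h}" "t \<in> {c<..<c + h}"
    "g (a + h, c + h) - g (a + h, c) - g (a, c + h) + g (a, c) = h * h * pd True (pd False g) (s, t)"
proof -
  have "((\<lambda>\<tau>. g (a + h, \<tau>) - g (a, \<tau>)) has_real_derivative
      pd False g (a + h, \<tau>) - pd False g (a, \<tau>)) (at \<tau>)" if "c \<le> \<tau>" "\<tau> \<le> c + h" for \<tau>
    using that \<open>h > 0\<close> by (intro DERIV_diff has_real_derivative_pd_v dg) (auto simp: cbox_Pair_eq)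
  from MVT2[where a = c and b = "c + h", OF _ this] \<open>h > 0\<close> obtain t where t: "c < t" "t < c + h"
    "(g (a + h, c + h) - g (a, c + h)) - (g (a + h, c) - g (a, c))
      = (c + h - c) * (pd False g (a + h, t) - pd False g (a, t))"
    by auto
  have "((\<lambda>\<sigma>. pd False g (\<sigma>, t)) has_real_derivative pd True (pd False g) (\<sigma>, t)) (at \<sigma>)"
    if "a \<le> \<sigma>" "\<sigma> \<le> a + h" for \<sigma>
    using that t by (intro has_real_derivative_pd_u dpd) (auto simp: cbox_Pair_eq)
  from MVT2[where a = a and b = "a + h", OF _ this] \<open>h > 0\<close> obtain s where s: "a < s" "s < a + h"
    "pd False g (a + h, t) - pd False g (a, t) = (a + h - a) * pd True (pd False g) (s, t)"
    by auto
  show ?thesis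
    using that[of s t] s t by (simp add: algebra_simps)
qed

lemma cbox_square_subset_ball:
  assumes "2 * h < r"
  shows "cbox (a, c) (a + h, c + h) \<subseteq> ball (a, c) r"
proof
  fix y
  assume "y \<in> cbox (a, c) (a + h, c + h)"
  then obtain s t where y: "y = (s, t)" "a \<le> s" "s \<le> a + h" "c \<le> t" "t \<le> c + h"
    by (cases y) (auto simp: cbox_Pair_eq)
  have "dist (a, c) y \<le> \<bar>dist a s\<bar> + \<bar>dist c t\<bar>"
    unfolding y dist_Pair_Pair by (rule sqrt_sum_squares_le_sum_abs)
  also have "\<dots> \<le> 2 * h"
    using y by (simp add: dist_real_def)
  finally show "y \<in> ball (a, c) r"
    using assms by simp
qed

lemma isCont_eq_if_values_meet_nearby:
  fixes G1 G2 :: "'a::metric_space \<Rightarrow> real"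
  assumes "isCont G1 x" "isCont G2 x"
    and meet: "\<And>d. d > 0 \<Longrightarrow> \<exists>y y'. dist y x < d \<and> dist y' x < d \<and> G1 y = G2 y'"
  shows "G1 x = G2 x"
proof (rule ccontr)
  define e where "e = \<bar>G1 x - G2 x\<bar> / 2"
  assume "G1 x \<noteq> G2 x"
  then have "e > 0"
    by (simp add: e_def)
  obtain d1 where d1: "d1 > 0" "\<And>y. dist y x < d1 \<Longrightarrow> dist (G1 y) (G1 x) < e"
    using assms(1) \<open>e > 0\<close> unfolding continuous_at_eps_delta by blast
  obtain d2 where d2: "d2 > 0" "\<And>y. dist y x < d2 \<Longrightarrow> dist (G2 y) (G2 x) < e"
    using assms(2) \<open>e > 0\<close> unfolding continuous_at_eps_delta by blast
  obtain y y' where "dist y x < min d1 d2" "dist y' x < min d1 d2" "G1 y = G2 y'"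
    using meet[of "min d1 d2"] d1 d2 by auto
  then have "\<bar>G1 y - G1 x\<bar> < e" "\<bar>G1 y - G2 x\<bar> < e"
    using d1(2)[of y] d2(2)[of y'] by (simp_all add: dist_real_def)
  then show False
    using abs_triangle_ineq[of "G1 x - G1 y" "G1 y - G2 x"] unfolding e_def
    by (simp add: abs_minus_commute)
qed

text \<open>Both mixed partials are limits of the same second difference quotient.\<close>

lemma pd_pd_commute_real:
  fixes g :: "real \<times> real \<Rightarrow> real"
  assumes U: "open U" and g: "smooth2 U g" and x: "x \<in> U"
  shows "pd True (pd False g) x = pd False (pd True g) x"
proof -
  have "isCont (pd False (pd True g)) x" "isCont (pd True (pd False g)) x"
    by (intro differentiable_imp_continuous_within smooth2_imp_differentiable[OF U _ x]
        smooth2_pd g)+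
  moreover have "\<exists>y y'. dist y x < d \<and> dist y' x < d \<and>
      pd False (pd True g) y = pd True (pd False g) y'" if "d > 0" for d
  proof -
    obtain r where r: "r > 0" "ball x r \<subseteq> U"
      using U x open_contains_ball by blast
    obtain a c where ac: "x = (a, c)"
      by (cases x)
    define h where "h = min d r / 3"
    have "h > 0"
      using r \<open>d > 0\<close> by (simp add: h_def)
    have square: "cbox (a, c) (a + h, c + h) \<subseteq> ball x (min d r)"
      unfolding ac h_def by (rule cbox_square_subset_ball) (use r \<open>d > 0\<close> in \<open>simp add: min_def\<close>)
    have diff: "pds bs g differentiable (at y)" if "y \<in> cbox (a, c) (a + h, c + h)" for y bs
    proof -
      have "y \<in> U"
        using that square r(2) by (auto simp: ball_min_Int)
      then show ?thesis
        using g differentiable_on_eq_differentiable_at[OF U] unfolding smooth2_def by blast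
    qed
    obtain s t where st: "s \<in> {a<..<a + h}" "t \<in> {c<..<c + h}"
      "g (a + h, c + h) - g (a + h, c) - g (a, c + h) + g (a, c) = h * h * pd False (pd True g) (s, t)"
      by (rule second_difference_pd_v_pd_u[OF \<open>h > 0\<close>]) (use diff[of _ "[]"] diff[of _ "[True]"] in auto)
    obtain s' t' where st': "s' \<in> {a<..<a + h}" "t' \<in> {c<..<c + h}"
      "g (a + h, c + h) - g (a + h, c) - g (a, c + h) + g (a, c) = h * h * pd True (pd False g) (s', t')"
      by (rule second_difference_pd_u_pd_v[OF \<open>h > 0\<close>]) (use diff[of _ "[]"] diff[of _ "[False]"] in auto)
    have "(s, t) \<in> ball x (min d r)" "(s', t') \<in> ball x (min d r)"
      using square st st' by (auto simp: cbox_Pair_eq subset_iff)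
    then show ?thesis
      using st(3) st'(3) \<open>h > 0\<close> by (intro exI[of _ "(s, t)"] exI[of _ "(s', t')"]) (auto simp: dist_commute)
  qed
  ultimately show ?thesis
    by (rule isCont_eq_if_values_meet_nearby[symmetric])
qed

lemma pd_pd_commute:
  fixes g :: "real \<times> real \<Rightarrow> 'a::euclidean_space"
  assumes U: "open U" and g: "smooth2 U g" and x: "x \<in> U"
  shows "pd True (pd False g) x = pd False (pd True g) x"
proof (rule euclidean_eqI)
  fix i :: 'a
  have component: "pd b g y \<bullet> i = pd b (\<lambda>z. g z \<bullet> i) y" if "smooth2 U g" "y \<in> U" for b y g
    using pd_linear[OF bounded_linear_inner_left smooth2_imp_differentiable[OF U that]] by simp
  have "pd c (pd b g) x \<bullet> i = pd c (pd b (\<lambda>z. g z \<bullet> i)) x" for b c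
  proof -
    have "pd c (pd b g) x \<bullet> i = pd c (\<lambda>z. pd b g z \<bullet> i) x"
      by (rule component[OF smooth2_pd[OF g] x])
    also have "\<dots> = pd c (pd b (\<lambda>z. g z \<bullet> i)) x"
      by (rule pd_cong[OF U x]) (rule component[OF g])
    finally show ?thesis .
  qed
  moreover have "smooth2 U (\<lambda>z. g z \<bullet> i)"
    by (rule smooth2_linear[OF U bounded_linear_inner_left g])
  ultimately show "pd True (pd False g) x \<bullet> i = pd False (pd True g) x \<bullet> i"
    using pd_pd_commute_real[OF U _ x] by simp
qed

section \<open>Dual frames in three-space\<close>

lemma det3_eq_inner_cross3: "det3 a b c = a \<bullet> cross3 b c"
  by (simp add: det3_def dot_cross_det)

lemma inner_dual_frame:
  assumes "det3 a b c \<noteq> 0"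
  defines "a' \<equiv> inverse (det3 a b c) *\<^sub>R cross3 b c"
    and "b' \<equiv> inverse (det3 a b c) *\<^sub>R cross3 c a"
    and "c' \<equiv> inverse (det3 a b c) *\<^sub>R cross3 a b"
  shows "a' \<bullet> a = 1" "a' \<bullet> b = 0" "a' \<bullet> c = 0"
    and "b' \<bullet> a = 0" "b' \<bullet> b = 1" "b' \<bullet> c = 0"
    and "c' \<bullet> a = 0" "c' \<bullet> b = 0" "c' \<bullet> c = 1"
proof -
  have "cross3 b c \<bullet> a = det3 a b c" "cross3 b c \<bullet> b = 0" "cross3 b c \<bullet> c = 0"
    "cross3 c a \<bullet> a = 0" "cross3 c a \<bullet> b = det3 a b c" "cross3 c a \<bullet> c = 0"
    "cross3 a b \<bullet> a = 0" "cross3 a b \<bullet> b = 0" "cross3 a b \<bullet> c = det3 a b c"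
    by (simp_all add: det3_def cross3_simps)
  with assms(1) show "a' \<bullet> a = 1" "a' \<bullet> b = 0" "a' \<bullet> c = 0"
    and "b' \<bullet> a = 0" "b' \<bullet> b = 1" "b' \<bullet> c = 0"
    and "c' \<bullet> a = 0" "c' \<bullet> b = 0" "c' \<bullet> c = 1"
    by (simp_all add: a'_def b'_def c'_def)
qed

lemma det3_scaleR_eq_sum_cross3:
  "det3 a b c *\<^sub>R w = (cross3 b c \<bullet> w) *\<^sub>R a + (cross3 c a \<bullet> w) *\<^sub>R b + (cross3 a b \<bullet> w) *\<^sub>R c"
  by (simp add: det3_def cross3_simps forall_3)

lemma det3_scaleR_eq_sum_inner:
  "det3 a b c *\<^sub>R w = (a \<bullet> w) *\<^sub>R cross3 b c + (b \<bullet> w) *\<^sub>R cross3 c a + (c \<bullet> w) *\<^sub>R cross3 a b"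
  by (simp add: det3_def cross3_simps forall_3)

lemma det3_mult_det3_eq_square:
  assumes "n \<bullet> a = 0" "n \<bullet> b = 0" "n \<bullet> c = 1"
    and "m \<bullet> a = - r" "m \<bullet> b = 0" "m \<bullet> c = 0"
    and "k \<bullet> a = 0" "k \<bullet> b = - r" "k \<bullet> c = 0"
  shows "det3 a b c * det3 n m k = r\<^sup>2"
proof -
  have rows: "(vector [n, m, k] :: real^3^3) ** transpose (vector [a, b, c]) =
      vector [vector [n \<bullet> a, n \<bullet> b, n \<bullet> c], vector [m \<bullet> a, m \<bullet> b, m \<bullet> c],
              vector [k \<bullet> a, k \<bullet> b, k \<bullet> c]]"
    by (simp add: vec_eq_iff forall_3 matrix_matrix_mult_def transpose_def vector_def sum_3
        inner_vec_def)
  have "det3 n m k * det3 a b c = det ((vector [n, m, k] :: real^3^3) ** transpose (vector [a, b, c]))"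
    by (simp add: det3_def det_mul det_transpose)
  also have "\<dots> = r\<^sup>2"
    unfolding rows assms by (simp add: det_3 vector_def power2_eq_square)
  finally show ?thesis
    by (simp add: mult.commute)
qed

section \<open>Equiaffine immersions in isothermal coordinates\<close>

locale equiaffine_isothermal_chart =
  fixes U :: "(real \<times> real) set"
    and f \<xi> \<nu> :: "real \<times> real \<Rightarrow> real^3"
    and \<rho> b11 b12 b21 b22 :: "real \<times> real \<Rightarrow> real"
  assumes open_U: "open U"
    and smooth_f: "smooth2 U f"
    and smooth_\<xi>: "smooth2 U \<xi>"
    and transversal: "x \<in> U \<Longrightarrow> det3 (pd True f x) (pd False f x) (\<xi> x) \<noteq> 0"
    and shape_u: "x \<in> U \<Longrightarrow> pd True \<xi> x = - b11 x *\<^sub>R pd True f x - b21 x *\<^sub>R pd False f x"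
    and shape_v: "x \<in> U \<Longrightarrow> pd False \<xi> x = - b12 x *\<^sub>R pd True f x - b22 x *\<^sub>R pd False f x"
    and rho_pos: "x \<in> U \<Longrightarrow> \<rho> x > 0"
    \<comment> \<open>by the Gauss formula, \<open>h = \<rho> (du\<^sup>2 + dv\<^sup>2)\<close> is the \<open>\<xi>\<close>-component of the second derivatives\<close>
    and f_uu: "x \<in> U \<Longrightarrow> pd True (pd True f) x - \<rho> x *\<^sub>R \<xi> x \<in> span {pd True f x, pd False f x}"
    and f_vv: "x \<in> U \<Longrightarrow> pd False (pd False f) x - \<rho> x *\<^sub>R \<xi> x \<in> span {pd True f x, pd False f x}"
    and f_uv: "x \<in> U \<Longrightarrow> pd False (pd True f) x \<in> span {pd True f x, pd False f x}"
    and conormal_f_u: "x \<in> U \<Longrightarrow> \<nu> x \<bullet> pd True f x = 0"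
    and conormal_f_v: "x \<in> U \<Longrightarrow> \<nu> x \<bullet> pd False f x = 0"
    and conormal_\<xi>: "x \<in> U \<Longrightarrow> \<nu> x \<bullet> \<xi> x = 1"
begin

lemmas smooth2_rules = smooth2_intros[OF open_U]
lemmas pd_rules = pd_simps[OF open_U]

definition frame_det :: "real \<times> real \<Rightarrow> real" where
  "frame_det x = det3 (pd True f x) (pd False f x) (\<xi> x)"

definition dual_u :: "real \<times> real \<Rightarrow> real^3" where
  "dual_u x = inverse (frame_det x) *\<^sub>R cross3 (pd False f x) (\<xi> x)"

definition dual_v :: "real \<times> real \<Rightarrow> real^3" where
  "dual_v x = inverse (frame_det x) *\<^sub>R cross3 (\<xi> x) (pd True f x)"

lemma conormal_f: "x \<in> U \<Longrightarrow> \<nu> x \<bullet> pd b f x = 0"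
  by (cases b) (simp_all add: conormal_f_u conormal_f_v)

lemma dual_u_inner:
  assumes "x \<in> U"
  shows "dual_u x \<bullet> pd b f x = (if b then 1 else 0)" "dual_u x \<bullet> \<xi> x = 0"
  unfolding dual_u_def frame_det_def
  by (cases b) (simp_all only: inner_dual_frame[OF transversal[OF assms]] if_True if_False)

lemma dual_v_inner:
  assumes "x \<in> U"
  shows "dual_v x \<bullet> pd b f x = (if b then 0 else 1)" "dual_v x \<bullet> \<xi> x = 0"
  unfolding dual_v_def frame_det_def
  by (cases b) (simp_all only: inner_dual_frame[OF transversal[OF assms]] if_True if_False)

lemma conormal_eq:
  assumes "x \<in> U"
  shows "\<nu> x = inverse (frame_det x) *\<^sub>R cross3 (pd True f x) (pd False f x)"
proof -
  have "frame_det x *\<^sub>R \<nu> x = cross3 (pd True f x) (pd False f x)"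
    using det3_scaleR_eq_sum_inner[of "pd True f x" "pd False f x" "\<xi> x" "\<nu> x"]
      conormal_f_u[OF assms] conormal_f_v[OF assms] conormal_\<xi>[OF assms]
    by (simp add: frame_det_def inner_commute)
  then have "inverse (frame_det x) *\<^sub>R (frame_det x *\<^sub>R \<nu> x) =
      inverse (frame_det x) *\<^sub>R cross3 (pd True f x) (pd False f x)"
    by simp
  then show ?thesis
    using transversal[OF assms] by (simp add: frame_det_def)
qed

lemma smooth2_frame_det: "smooth2 U frame_det"
  unfolding frame_det_def det3_eq_inner_cross3 using smooth_f smooth_\<xi> by (simp add: smooth2_rules)

lemma smooth2_inverse_frame_det: "smooth2 U (\<lambda>x. inverse (frame_det x))"
  using smooth2_inverse[OF open_U _ smooth2_frame_det] transversal by (simp add: frame_det_def)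

lemma smooth2_dual_u: "smooth2 U dual_u"
  and smooth2_dual_v: "smooth2 U dual_v"
  unfolding dual_u_def[abs_def] dual_v_def[abs_def]
  using smooth_f smooth_\<xi> smooth2_inverse_frame_det by (simp_all add: smooth2_rules)

lemma smooth2_conormal: "smooth2 U \<nu>"
  by (rule smooth2_cong[OF open_U conormal_eq[symmetric]])
    (use smooth_f smooth_\<xi> smooth2_inverse_frame_det in \<open>simp_all add: smooth2_rules\<close>)

lemma conormal_pd_\<xi>: "x \<in> U \<Longrightarrow> \<nu> x \<bullet> pd b \<xi> x = 0"
  by (cases b) (simp_all add: shape_u shape_v conormal_f_u conormal_f_v inner_diff_right)

lemma dual_u_pd_\<xi>:
  "x \<in> U \<Longrightarrow> dual_u x \<bullet> pd True \<xi> x = - b11 x" "x \<in> U \<Longrightarrow> dual_u x \<bullet> pd False \<xi> x = - b12 x"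
  by (simp_all add: shape_u shape_v inner_diff_right dual_u_inner)

lemma dual_v_pd_\<xi>:
  "x \<in> U \<Longrightarrow> dual_v x \<bullet> pd True \<xi> x = - b21 x" "x \<in> U \<Longrightarrow> dual_v x \<bullet> pd False \<xi> x = - b22 x"
  by (simp_all add: shape_u shape_v inner_diff_right dual_v_inner)

lemma smooth2_shape: "smooth2 U b11" "smooth2 U b12" "smooth2 U b21" "smooth2 U b22"
proof -
  have "smooth2 U (\<lambda>x. - (e x \<bullet> pd b \<xi> x))" if "smooth2 U e" for e b
    using that smooth_\<xi> by (simp add: smooth2_rules)
  note minus_inner = this
  show "smooth2 U b11"
    by (rule smooth2_cong[OF open_U _ minus_inner[OF smooth2_dual_u, of True]]) (simp add: dual_u_pd_\<xi>)
  show "smooth2 U b12"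
    by (rule smooth2_cong[OF open_U _ minus_inner[OF smooth2_dual_u, of False]]) (simp add: dual_u_pd_\<xi>)
  show "smooth2 U b21"
    by (rule smooth2_cong[OF open_U _ minus_inner[OF smooth2_dual_v, of True]]) (simp add: dual_v_pd_\<xi>)
  show "smooth2 U b22"
    by (rule smooth2_cong[OF open_U _ minus_inner[OF smooth2_dual_v, of False]]) (simp add: dual_v_pd_\<xi>)
qed

lemma conormal_pd_pd_f:
  assumes "x \<in> U"
  shows "\<nu> x \<bullet> pd b (pd c f) x = (if b = c then \<rho> x else 0)"
proof -
  have normal: "\<nu> x \<bullet> v = 0" if "v \<in> span {pd True f x, pd False f x}" for v
    using orthogonal_to_span[OF that, of "\<nu> x"] conormal_f[OF assms]
    by (auto simp: orthogonal_def)
  have "\<nu> x \<bullet> pd True (pd False f) x = \<nu> x \<bullet> pd False (pd True f) x"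
    using pd_pd_commute[OF open_U smooth_f assms] by simp
  then show ?thesis
    using normal[OF f_uu[OF assms]] normal[OF f_vv[OF assms]] normal[OF f_uv[OF assms]]
      conormal_\<xi>[OF assms]
    by (cases b; cases c) (simp_all add: inner_diff_right)
qed

lemma smooth2_rho: "smooth2 U \<rho>"
  by (rule smooth2_cong[OF open_U, of "\<lambda>x. \<nu> x \<bullet> pd True (pd True f) x"])
    (use conormal_pd_pd_f[of _ True True] smooth2_conormal smooth_f in \<open>simp_all add: smooth2_rules\<close>)

lemma smooth2_minus_rho: "smooth2 U (\<lambda>x. - \<rho> x)"
  using smooth2_rho by (simp add: smooth2_rules)

lemma frame_det_mult_conormal_det:
  assumes "x \<in> U"
  shows "det3 (pd True f x) (pd False f x) (\<xi> x) * det3 (\<nu> x) (pd True \<nu> x) (pd False \<nu> x) = (\<rho> x)\<^sup>2"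
proof (rule det3_mult_det3_eq_square)
  have "pd b \<nu> x \<bullet> pd c f x = - (if b = c then \<rho> x else 0)" for b c
    using pd_inner_eq_const[OF open_U smooth2_conormal smooth2_pd[OF smooth_f] assms conormal_f]
      conormal_pd_pd_f[OF assms] by simp
  moreover have "pd b \<nu> x \<bullet> \<xi> x = 0" for b
    using pd_inner_eq_const[OF open_U smooth2_conormal smooth_\<xi> assms conormal_\<xi>]
      conormal_pd_\<xi>[OF assms] by simp
  ultimately show "pd True \<nu> x \<bullet> pd True f x = - \<rho> x" "pd True \<nu> x \<bullet> pd False f x = 0"
    "pd True \<nu> x \<bullet> \<xi> x = 0" "pd False \<nu> x \<bullet> pd True f x = 0"
    "pd False \<nu> x \<bullet> pd False f x = - \<rho> x" "pd False \<nu> x \<bullet> \<xi> x = 0"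
    by simp_all
qed (use assms conormal_f_u conormal_f_v conormal_\<xi> in auto)

definition coord_u :: "real^3 \<Rightarrow> real \<times> real \<Rightarrow> real" where
  "coord_u q x = dual_u x \<bullet> (f x - q)"

definition coord_v :: "real^3 \<Rightarrow> real \<times> real \<Rightarrow> real" where
  "coord_v q x = dual_v x \<bullet> (f x - q)"

definition support :: "real^3 \<Rightarrow> real \<times> real \<Rightarrow> real" where
  "support q x = \<nu> x \<bullet> (f x - q)"

lemma smooth2_coords: "smooth2 U (coord_u q)" "smooth2 U (coord_v q)" "smooth2 U (support q)"
  unfolding coord_u_def[abs_def] coord_v_def[abs_def] support_def[abs_def]
  using smooth_f smooth2_dual_u smooth2_dual_v smooth2_conormal by (simp_all add: smooth2_rules)

lemma position_decomposition:
  assumes "x \<in> U"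
  shows "f x - q = coord_u q x *\<^sub>R pd True f x + coord_v q x *\<^sub>R pd False f x + support q x *\<^sub>R \<xi> x"
proof -
  have "frame_det x *\<^sub>R (f x - q) = (cross3 (pd False f x) (\<xi> x) \<bullet> (f x - q)) *\<^sub>R pd True f x
      + (cross3 (\<xi> x) (pd True f x) \<bullet> (f x - q)) *\<^sub>R pd False f x
      + (cross3 (pd True f x) (pd False f x) \<bullet> (f x - q)) *\<^sub>R \<xi> x"
    unfolding frame_det_def by (rule det3_scaleR_eq_sum_cross3)
  then have "inverse (frame_det x) *\<^sub>R (frame_det x *\<^sub>R (f x - q)) = inverse (frame_det x) *\<^sub>R
      ((cross3 (pd False f x) (\<xi> x) \<bullet> (f x - q)) *\<^sub>R pd True f x
      + (cross3 (\<xi> x) (pd True f x) \<bullet> (f x - q)) *\<^sub>R pd False f x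
      + (cross3 (pd True f x) (pd False f x) \<bullet> (f x - q)) *\<^sub>R \<xi> x)"
    by simp
  then show ?thesis
    using transversal[OF assms] conormal_eq[OF assms]
    by (simp add: coord_u_def coord_v_def support_def dual_u_def dual_v_def frame_det_def
        scaleR_add_right)
qed

lemma pd_position_decomposition:
  assumes "x \<in> U"
  shows "pd b f x = pd b (coord_u q) x *\<^sub>R pd True f x + coord_u q x *\<^sub>R pd b (pd True f) x
    + pd b (coord_v q) x *\<^sub>R pd False f x + coord_v q x *\<^sub>R pd b (pd False f) x
    + pd b (support q) x *\<^sub>R \<xi> x + support q x *\<^sub>R pd b \<xi> x"
proof -
  have "pd b (\<lambda>x. f x - q) x = pd b (\<lambda>x. coord_u q x *\<^sub>R pd True f x + coord_v q x *\<^sub>R pd False f x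
      + support q x *\<^sub>R \<xi> x) x"
    by (rule pd_cong[OF open_U assms position_decomposition])
  then show ?thesis
    using assms smooth_f smooth_\<xi> smooth2_coords by (simp add: pd_rules smooth2_rules add.assoc)
qed

lemma inner_pd_position_decomposition:
  assumes "x \<in> U"
  shows "e \<bullet> pd b f x = pd b (coord_u q) x * (e \<bullet> pd True f x) + coord_u q x * (e \<bullet> pd b (pd True f) x)
    + pd b (coord_v q) x * (e \<bullet> pd False f x) + coord_v q x * (e \<bullet> pd b (pd False f) x)
    + pd b (support q) x * (e \<bullet> \<xi> x) + support q x * (e \<bullet> pd b \<xi> x)"
  by (subst pd_position_decomposition[OF assms, of b q]) (simp add: inner_add_right)

lemma pd_coord_u:
  assumes "x \<in> U"
  shows "pd b (coord_u q) x = (if b then 1 else 0) - coord_u q x * (dual_u x \<bullet> pd b (pd True f) x)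
    - coord_v q x * (dual_u x \<bullet> pd b (pd False f) x) - support q x * (dual_u x \<bullet> pd b \<xi> x)"
proof -
  have "(if b then 1 else 0) = pd b (coord_u q) x + coord_u q x * (dual_u x \<bullet> pd b (pd True f) x)
      + coord_v q x * (dual_u x \<bullet> pd b (pd False f) x) + support q x * (dual_u x \<bullet> pd b \<xi> x)"
    using inner_pd_position_decomposition[OF assms, of "dual_u x" b q] by (simp add: dual_u_inner[OF assms])
  then show ?thesis
    by linarith
qed

lemma pd_coord_v:
  assumes "x \<in> U"
  shows "pd b (coord_v q) x = (if b then 0 else 1) - coord_u q x * (dual_v x \<bullet> pd b (pd True f) x)
    - coord_v q x * (dual_v x \<bullet> pd b (pd False f) x) - support q x * (dual_v x \<bullet> pd b \<xi> x)"
proof -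
  have "(if b then 0 else 1) = pd b (coord_v q) x + coord_u q x * (dual_v x \<bullet> pd b (pd True f) x)
      + coord_v q x * (dual_v x \<bullet> pd b (pd False f) x) + support q x * (dual_v x \<bullet> pd b \<xi> x)"
    using inner_pd_position_decomposition[OF assms, of "dual_v x" b q] by (simp add: dual_v_inner[OF assms])
  then show ?thesis
    by linarith
qed

lemma pd_support:
  assumes "x \<in> U"
  shows "pd True (support q) x = - (coord_u q x * \<rho> x)"
    and "pd False (support q) x = - (coord_v q x * \<rho> x)"
proof -
  have sum: "0 = pd b (support q) x + coord_u q x * (\<nu> x \<bullet> pd b (pd True f) x)
      + coord_v q x * (\<nu> x \<bullet> pd b (pd False f) x)" for b
    using inner_pd_position_decomposition[OF assms, of "\<nu> x" b q]
    by (simp add: conormal_f[OF assms] conormal_\<xi>[OF assms] conormal_pd_\<xi>[OF assms])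
  have "0 = pd True (support q) x + coord_u q x * \<rho> x"
    using sum[of True] by (simp add: conormal_pd_pd_f[OF assms])
  then show "pd True (support q) x = - (coord_u q x * \<rho> x)"
    by linarith
  have "0 = pd False (support q) x + coord_v q x * \<rho> x"
    using sum[of False] by (simp add: conormal_pd_pd_f[OF assms])
  then show "pd False (support q) x = - (coord_v q x * \<rho> x)"
    by linarith
qed

lemma pd_dual_inner_pd_\<xi>:
  assumes "x \<in> U"
  shows "pd c (\<lambda>y. dual_u y \<bullet> pd True \<xi> y) x = - pd c b11 x"
    and "pd c (\<lambda>y. dual_u y \<bullet> pd False \<xi> y) x = - pd c b12 x"
    and "pd c (\<lambda>y. dual_v y \<bullet> pd False \<xi> y) x = - pd c b22 x"
  using pd_cong[OF open_U assms dual_u_pd_\<xi>(1)] pd_cong[OF open_U assms dual_u_pd_\<xi>(2)]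
    pd_cong[OF open_U assms dual_v_pd_\<xi>(2)]
  by (simp_all add: pd_minus[OF open_U assms] smooth2_shape)

context
  fixes z :: "real \<times> real" and lam :: real and q :: "real^3"
  assumes z: "z \<in> U"
    and umbilic: "b11 z = lam" "b22 z = lam" "b12 z = 0" "b21 z = 0"
    and lam: "lam \<noteq> 0"
    and focal_point: "q = f z + (1 / lam) *\<^sub>R \<xi> z"
begin

lemma coords_at_umbilic: "coord_u q z = 0" "coord_v q z = 0" "support q z = - 1 / lam"
  using dual_u_inner[OF z] dual_v_inner[OF z] conormal_\<xi>[OF z]
  by (simp_all add: coord_u_def coord_v_def support_def focal_point)

lemma pd_coords_at_umbilic: "pd b (coord_u q) z = 0" "pd b (coord_v q) z = 0" "pd b (support q) z = 0"
  using lam umbilic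
  by (cases b; simp add: pd_coord_u[OF z] pd_coord_v[OF z] pd_support[OF z] coords_at_umbilic
      dual_u_pd_\<xi>[OF z] dual_v_pd_\<xi>[OF z])+

lemma pd_pd_coords_at_umbilic:
  "pd c (pd True (coord_u q)) z = - pd c b11 z / lam"
  "pd c (pd False (coord_u q)) z = - pd c b12 z / lam"
  "pd c (pd False (coord_v q)) z = - pd c b22 z / lam"
proof -
  have smooth: "smooth2 U (\<lambda>x. e x \<bullet> pd b g x)" if "smooth2 U e" "smooth2 U g" for e g b
    using that by (simp add: smooth2_rules)
  have "pd c (pd b (coord_u q)) z = pd c (\<lambda>x. dual_u x \<bullet> pd b \<xi> x) z / lam" for b
  proof -
    have "pd c (pd b (coord_u q)) z = pd c (\<lambda>x. (if b then 1 else 0)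
        - coord_u q x * (dual_u x \<bullet> pd b (pd True f) x) - coord_v q x * (dual_u x \<bullet> pd b (pd False f) x)
        - support q x * (dual_u x \<bullet> pd b \<xi> x)) z"
      by (rule pd_cong[OF open_U z pd_coord_u])
    then show ?thesis
      using z smooth2_coords smooth2_dual_u smooth_f smooth_\<xi>
      by (simp add: pd_rules smooth2_rules smooth coords_at_umbilic pd_coords_at_umbilic)
  qed
  moreover have "pd c (pd False (coord_v q)) z = pd c (\<lambda>x. dual_v x \<bullet> pd False \<xi> x) z / lam"
  proof -
    have "pd c (pd False (coord_v q)) z = pd c (\<lambda>x. 1
        - coord_u q x * (dual_v x \<bullet> pd False (pd True f) x)
        - coord_v q x * (dual_v x \<bullet> pd False (pd False f) x)
        - support q x * (dual_v x \<bullet> pd False \<xi> x)) z"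
      by (rule pd_cong[OF open_U z]) (simp add: pd_coord_v)
    then show ?thesis
      using z smooth2_coords smooth2_dual_v smooth_f smooth_\<xi>
      by (simp add: pd_rules smooth2_rules smooth coords_at_umbilic pd_coords_at_umbilic)
  qed
  ultimately show "pd c (pd True (coord_u q)) z = - pd c b11 z / lam"
    "pd c (pd False (coord_u q)) z = - pd c b12 z / lam"
    "pd c (pd False (coord_v q)) z = - pd c b22 z / lam"
    by (simp_all add: pd_dual_inner_pd_\<xi>[OF z])
qed

lemma pd_pd_support_at_umbilic: "pd c (pd b (support q)) z = 0"
proof -
  have "pd c (pd True (support q)) z = pd c (coord_u q) z * - \<rho> z"
    by (rule pd_mult_vanishing[OF open_U z smooth2_coords(1) smooth2_minus_rho])
      (simp_all add: pd_support coords_at_umbilic)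
  moreover have "pd c (pd False (support q)) z = pd c (coord_v q) z * - \<rho> z"
    by (rule pd_mult_vanishing[OF open_U z smooth2_coords(2) smooth2_minus_rho])
      (simp_all add: pd_support coords_at_umbilic)
  ultimately show ?thesis
    by (cases b) (simp_all add: pd_coords_at_umbilic)
qed

lemma pd3_support_at_umbilic:
  "pd c (pd True (pd True (support q))) z = \<rho> z / lam * pd c b11 z"
  "pd c (pd False (pd False (support q))) z = \<rho> z / lam * pd c b22 z"
  "pd c (pd False (pd True (support q))) z = \<rho> z / lam * pd c b12 z"
proof -
  note vanishing_u = pd_pd_mult_vanishing[OF open_U z smooth2_coords(1) smooth2_minus_rho]
  note vanishing_v = pd_pd_mult_vanishing[OF open_U z smooth2_coords(2) smooth2_minus_rho]
  have "pd c (pd True (pd True (support q))) z = pd c (pd True (coord_u q)) z * - \<rho> z"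
    by (rule vanishing_u) (simp_all add: pd_support coords_at_umbilic pd_coords_at_umbilic)
  moreover have "pd c (pd False (pd False (support q))) z = pd c (pd False (coord_v q)) z * - \<rho> z"
    by (rule vanishing_v) (simp_all add: pd_support coords_at_umbilic pd_coords_at_umbilic)
  moreover have "pd c (pd False (pd True (support q))) z = pd c (pd False (coord_u q)) z * - \<rho> z"
    by (rule vanishing_u) (simp_all add: pd_support coords_at_umbilic pd_coords_at_umbilic)
  ultimately show "pd c (pd True (pd True (support q))) z = \<rho> z / lam * pd c b11 z"
    "pd c (pd False (pd False (support q))) z = \<rho> z / lam * pd c b22 z"
    "pd c (pd False (pd True (support q))) z = \<rho> z / lam * pd c b12 z"
    by (simp_all add: pd_pd_coords_at_umbilic)
qed

lemma jet1_support_hessian_at_umbilic: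
  "jet1 (\<lambda>x. (pd True (pd True (support q)) x - pd False (pd False (support q)) x,
              2 * pd False (pd True (support q)) x)) z
    = (\<rho> z / lam) *\<^sub>R jet1 (\<lambda>x. (b11 x - b22 x, 2 * b12 x)) z"
proof -
  have smooth: "smooth2 U (pd c (pd b (support q)))" for b c
    by (intro smooth2_pd smooth2_coords)
  have "pd c (\<lambda>x. (pd True (pd True (support q)) x - pd False (pd False (support q)) x,
      2 * pd False (pd True (support q)) x)) z
      = (\<rho> z / lam * (pd c b11 z - pd c b22 z), \<rho> z / lam * (2 * pd c b12 z))" for c
    using z smooth by (simp add: pd_Pair smooth2_imp_differentiable[OF open_U] smooth2_rules
        pd_rules pd3_support_at_umbilic algebra_simps)
  moreover have "pd c (\<lambda>x. (b11 x - b22 x, 2 * b12 x)) z = (pd c b11 z - pd c b22 z, 2 * pd c b12 z)"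
    for c
    using z smooth2_shape by (simp add: pd_Pair smooth2_imp_differentiable[OF open_U] smooth2_rules
        pd_rules)
  ultimately show ?thesis
    using umbilic by (simp add: jet1_def pd_u_eq_pd pd_v_eq_pd pd_pd_support_at_umbilic)
qed

end

end

theorem proposition4p2:
  fixes U :: "(real \<times> real) set"
    and f \<xi> \<nu> :: "real \<times> real \<Rightarrow> real^3"
    and \<rho> b11 b12 b21 b22 :: "real \<times> real \<Rightarrow> real"
    and lam0 :: real
  assumes U: "open U" "(0,0) \<in> U"
    and smooth: "smooth2 U f" "smooth2 U \<xi>"
    and transversal: "\<forall>x\<in>U. det3 (pd_u f x) (pd_v f x) (\<xi> x) \<noteq> 0"
    and shape: "\<forall>x\<in>U. pd_u \<xi> x = - b11 x *\<^sub>R pd_u f x - b21 x *\<^sub>R pd_v f x"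
               "\<forall>x\<in>U. pd_v \<xi> x = - b12 x *\<^sub>R pd_u f x - b22 x *\<^sub>R pd_v f x"
    and isothermal: "\<forall>x\<in>U. \<rho> x > 0"
      "\<forall>x\<in>U. pd_u (pd_u f) x - \<rho> x *\<^sub>R \<xi> x \<in> span {pd_u f x, pd_v f x}"
      "\<forall>x\<in>U. pd_v (pd_v f) x - \<rho> x *\<^sub>R \<xi> x \<in> span {pd_u f x, pd_v f x}"
      "\<forall>x\<in>U. pd_v (pd_u f) x \<in> span {pd_u f x, pd_v f x}"
    and umbilic: "b11 (0,0) = lam0" "b22 (0,0) = lam0" "b12 (0,0) = 0" "b21 (0,0) = 0"
    and lam: "lam0 \<noteq> 0"
    and conormal: "\<forall>x\<in>U. \<nu> x \<bullet> pd_u f x = 0 \<and> \<nu> x \<bullet> pd_v f x = 0 \<and> \<nu> x \<bullet> \<xi> x = 1"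
  shows
    "let q0 = f (0,0) + (1 / lam0) *\<^sub>R \<xi> (0,0);
         p = (\<lambda>x. \<nu> x \<bullet> (f x - q0));
         P = (\<lambda>x. (pd_u (pd_u p) x - pd_v (pd_v p) x, 2 * pd_v (pd_u p) x));
         B = (\<lambda>x. (b11 x - b22 x, 2 * b12 x));
         \<delta>0 = det3 (pd_u f (0,0)) (pd_v f (0,0)) (\<xi> (0,0))
              * det3 (\<nu> (0,0)) (pd_u \<nu> (0,0)) (pd_v \<nu> (0,0)) / \<rho> (0,0)
     in jet1 P (0,0) = (\<delta>0 / lam0) *\<^sub>R jet1 B (0,0)"
proof -
  interpret equiaffine_isothermal_chart U f \<xi> \<nu> \<rho> b11 b12 b21 b22
    using assms unfolding pd_u_eq_pd pd_v_eq_pd by unfold_locales auto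
  define q0 where "q0 = f (0,0) + (1 / lam0) *\<^sub>R \<xi> (0,0)"
  have "det3 (pd True f (0,0)) (pd False f (0,0)) (\<xi> (0,0))
      * det3 (\<nu> (0,0)) (pd True \<nu> (0,0)) (pd False \<nu> (0,0)) / \<rho> (0,0) = \<rho> (0,0)"
    using frame_det_mult_conormal_det[OF U(2)] rho_pos[OF U(2)] by (simp add: power2_eq_square)
  moreover have "support q0 = (\<lambda>x. \<nu> x \<bullet> (f x - q0))"
    by (simp add: support_def fun_eq_iff)
  ultimately show ?thesis
    using jet1_support_hessian_at_umbilic[OF U(2) umbilic lam q0_def]
    unfolding Let_def pd_u_eq_pd pd_v_eq_pd q0_def[symmetric] by simp
qed

end
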